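(* Let $E$ be a separable Hilbert space and let $\mu$ be a probability measure on $E$ with $\int_{E}\|x\|\,d\mu(x)<\infty$ and $\int_{E}x\,d\mu(x)=0$. Let $n\in\mathbb{N}$ and let $X_{1},\ldots,X_{n}$ be i.i.d. random elements of $E$ with distribution $\mu$. Then \[\mathbb{E}\,W_{1,1}\Big(\mu,\frac{1}{n}\sum_{i=1}^{n}\delta_{X_{i}}\Big)\geq\frac{1}{2\sqrt{2n}}\int_{E}\|x\|\,d\mu(x).\]
   Context: For probability measures $\mu_{1},\mu_{2}$ on $E$, $W_{1,1}(\mu_{1},\mu_{2})=\sup_{v\in E,\|v\|\leq 1}W_{1}(v_{\#}\mu_{1},v_{\#}\mu_{2})$, where $v_{\#}\mu_{i}$ is the pushforward under $x\mapsto\langle x,v\rangle$ and $W_{1}$ is the 1-Wasserstein distance on $\mathbb{R}$. $\delta_{x}$ denotes a Dirac mass. *)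

theory Defs
  imports "HOL-Probability.Probability"
begin

definition W1 :: "real measure \<Rightarrow> real measure \<Rightarrow> ennreal" where
  "W1 P Q = (INF \<pi> \<in> {\<pi> :: (real \<times> real) measure.
       sets \<pi> = sets (borel :: (real \<times> real) measure) \<and>
       distr \<pi> borel fst = P \<and> distr \<pi> borel snd = Q}.
     \<integral>\<^sup>+ z. ennreal \<bar>fst z - snd z\<bar> \<partial>\<pi>)"

definition W11 :: "'a::real_inner measure \<Rightarrow> 'a measure \<Rightarrow> ennreal" where
  "W11 \<mu>1 \<mu>2 = (SUP v \<in> {v. norm v \<le> 1}.
      W1 (distr \<mu>1 borel (\<lambda>x. x \<bullet> v)) (distr \<mu>2 borel (\<lambda>x. x \<bullet> v)))"

definition empirical_measure :: "nat \<Rightarrow> (nat \<Rightarrow> 'a::topological_space) \<Rightarrow> 'a measure" where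
  "empirical_measure n x =
     measure_of UNIV (sets borel) (\<lambda>A. ennreal (real (card {i\<in>{..<n}. x i \<in> A}) / real n))"

end

theory Submission
  imports Defs
begin

text \<open>
  Let \<open>S = X\<^sub>1 + \<dots> + X\<^sub>n\<close>. Testing \<open>W\<^sub>1\<^sub>,\<^sub>1\<close> in the direction of S and comparing only the
  means of the projected measures gives \<open>W\<^sub>1\<^sub>,\<^sub>1(\<mu>, \<mu>\<^sub>n) \<ge> \<parallel>S\<parallel> / n\<close>, because \<open>\<mu>\<close> is centred.
  For centred i.i.d. summands, \<open>E\<parallel>S\<parallel>\<close> dominates \<open>E\<parallel>\<Sum>\<^sub>i\<^sub>\<in>\<^sub>A X\<^sub>i\<parallel>\<close> for every A (Jensen's
  inequality for the remaining summands), hence \<open>E\<parallel>\<Sum>\<^sub>i \<epsilon>\<^sub>i X\<^sub>i\<parallel> \<le> 2 E\<parallel>S\<parallel>\<close> for every sign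
  vector \<open>\<epsilon>\<close>. Averaging over \<open>\<epsilon>\<close> and using the Khintchine-type inequality
  \<open>avg\<^sub>\<epsilon> \<parallel>\<Sum>\<^sub>i \<epsilon>\<^sub>i x\<^sub>i\<parallel> \<ge> (\<Sum>\<^sub>i \<parallel>x\<^sub>i\<parallel>) / sqrt (2n)\<close>, valid in every inner product space, yields
  \<open>E\<parallel>S\<parallel> \<ge> n / (2 sqrt (2n)) \<integral>\<parallel>x\<parallel> d\<mu>\<close>.

  The Khintchine inequality is Fourier analysis on the discrete cube: \<open>f(\<epsilon>) = \<parallel>\<Sum>\<^sub>i \<epsilon>\<^sub>i x\<^sub>i\<parallel>\<close>
  is even, so its Walsh expansion has no terms of level one, and the Poincare inequality improves
  to \<open>4 Var f \<le> \<Sum>\<^sub>i E f (f - f \<circ> flip\<^sub>i)\<close>. By Cauchy-Schwarz the right-hand side is at most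
  \<open>2 E f\<^sup>2\<close>, and \<open>E f\<^sup>2 = \<Sum>\<^sub>i \<parallel>x\<^sub>i\<parallel>\<^sup>2\<close>; hence \<open>(E f)\<^sup>2 \<ge> \<Sum>\<^sub>i \<parallel>x\<^sub>i\<parallel>\<^sup>2 / 2\<close>.
\<close>

section \<open>Walsh analysis on the discrete cube\<close>

text \<open>A set \<open>B \<subseteq> I\<close> encodes the sign vector \<open>\<epsilon> \<in> {-1, 1}\<^sup>I\<close> with \<open>\<epsilon>\<^sub>i = -1\<close> exactly for
  \<open>i \<in> B\<close>; flipping the sign of \<open>\<epsilon>\<^sub>i\<close> is \<open>sym_diff B {i}\<close>.\<close>

definition cube_sign :: "'i set \<Rightarrow> 'i \<Rightarrow> real" where
  "cube_sign B i = (if i \<in> B then -1 else 1)"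

definition walsh :: "'i set \<Rightarrow> 'i set \<Rightarrow> real" where
  "walsh A B = (\<Prod>i\<in>A. cube_sign B i)"

definition cube_mean :: "'i set \<Rightarrow> ('i set \<Rightarrow> real) \<Rightarrow> real" where
  "cube_mean I f = (\<Sum>B\<in>Pow I. f B) / 2 ^ card I"

definition walsh_coeff :: "'i set \<Rightarrow> ('i set \<Rightarrow> real) \<Rightarrow> 'i set \<Rightarrow> real" where
  "walsh_coeff I f A = cube_mean I (\<lambda>B. f B * walsh A B)"

lemma cube_sign_flip:
  "cube_sign (sym_diff B {i}) j = (if j = i then - cube_sign B j else cube_sign B j)"
  by (auto simp: cube_sign_def)

lemma sym_diff_sym_diff_cancel: "sym_diff (sym_diff B C) C = B"
  by auto

lemma sum_Pow_flip:
  assumes "i \<in> I"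
  shows "(\<Sum>B\<in>Pow I. g (sym_diff B {i})) = (\<Sum>B\<in>Pow I. g B)"
  by (rule sum.reindex_bij_witness[of _ "\<lambda>B. sym_diff B {i}" "\<lambda>B. sym_diff B {i}"])
     (use assms in auto)

lemma cube_mean_sum: "cube_mean I (\<lambda>B. \<Sum>j\<in>J. g j B) = (\<Sum>j\<in>J. cube_mean I (g j))"
  by (simp add: cube_mean_def sum.swap[of _ "Pow I"] sum_divide_distrib)

lemma cube_mean_mult_right: "cube_mean I (\<lambda>B. g B * c) = cube_mean I g * c"
  by (simp add: cube_mean_def sum_distrib_right)

lemma cube_mean_const: "finite I \<Longrightarrow> cube_mean I (\<lambda>_. c) = c"
  by (simp add: cube_mean_def card_Pow)

lemma cube_mean_mono: "(\<And>B. B \<subseteq> I \<Longrightarrow> g B \<le> h B) \<Longrightarrow> cube_mean I g \<le> cube_mean I h"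
  unfolding cube_mean_def by (intro divide_right_mono sum_mono) auto

lemma walsh_mult: "walsh A B * walsh A C = walsh A (sym_diff B C)"
  unfolding walsh_def prod.distrib[symmetric]
  by (rule prod.cong) (auto simp: cube_sign_def)

lemma walsh_singleton: "finite A \<Longrightarrow> walsh A {i} = cube_sign A i"
  unfolding walsh_def cube_sign_def
  by (subst prod.delta[symmetric]) (auto intro!: prod.cong)

lemma walsh_Diff:
  assumes "A \<subseteq> I"
  shows "walsh A (I - B) = (-1) ^ card A * walsh A B"
proof -
  have "walsh A (I - B) = (\<Prod>i\<in>A. - cube_sign B i)"
    unfolding walsh_def using assms by (intro prod.cong) (auto simp: cube_sign_def)
  then show ?thesis
    by (simp add: walsh_def prod_uminus)
qed

lemma sum_walsh:
  assumes "finite I"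
  shows "(\<Sum>A\<in>Pow I. walsh A C) = (if I \<inter> C = {} then 2 ^ card I else 0)"
proof -
  have "(\<Sum>A\<in>Pow I. walsh A C) = (\<Prod>i\<in>I. cube_sign C i + 1)"
    using prod_add[OF assms, of "cube_sign C" "\<lambda>_. 1"] by (simp add: walsh_def)
  also have "\<dots> = (if I \<inter> C = {} then 2 ^ card I else 0)"
  proof (cases "I \<inter> C = {}")
    case True
    then have "(\<Prod>i\<in>I. cube_sign C i + 1) = (\<Prod>i\<in>I. 2)"
      by (intro prod.cong) (auto simp: cube_sign_def)
    with True show ?thesis by simp
  next
    case False
    then have "(\<Prod>i\<in>I. cube_sign C i + 1) = 0"
      using assms by (subst prod_zero_iff) (auto simp: cube_sign_def)
    with False show ?thesis by simp
  qed
  finally show ?thesis .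
qed

lemma sum_walsh_mult_walsh:
  assumes "finite I" "B \<subseteq> I" "C \<subseteq> I"
  shows "(\<Sum>A\<in>Pow I. walsh A B * walsh A C) = (if B = C then 2 ^ card I else 0)"
proof -
  have "(I \<inter> sym_diff B C = {}) = (B = C)"
    using assms by auto
  then show ?thesis
    using sum_walsh[OF assms(1), of "sym_diff B C"] by (simp add: walsh_mult)
qed

lemma parseval:
  assumes "finite I"
  shows "(\<Sum>A\<in>Pow I. walsh_coeff I f A * walsh_coeff I g A) = cube_mean I (\<lambda>B. f B * g B)"
proof -
  have "(\<Sum>A\<in>Pow I. (\<Sum>B\<in>Pow I. f B * walsh A B) * (\<Sum>C\<in>Pow I. g C * walsh A C))
      = (\<Sum>A\<in>Pow I. \<Sum>B\<in>Pow I. \<Sum>C\<in>Pow I. f B * g C * (walsh A B * walsh A C))"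
    by (simp only: sum_product mult_ac)
  also have "\<dots> = (\<Sum>B\<in>Pow I. \<Sum>C\<in>Pow I. f B * g C * (\<Sum>A\<in>Pow I. walsh A B * walsh A C))"
    unfolding sum_distrib_left by (subst sum.swap) (rule sum.cong[OF refl], rule sum.swap)
  also have "\<dots> = (\<Sum>B\<in>Pow I. f B * g B * 2 ^ card I)"
    using assms by (intro sum.cong refl)
      (simp add: sum_walsh_mult_walsh if_distrib if_distribR sum.delta cong: if_cong)
  finally show ?thesis
    by (simp add: walsh_coeff_def cube_mean_def sum_divide_distrib[symmetric]
        sum_distrib_right[symmetric] power2_eq_square)
qed

lemma walsh_coeff_empty: "walsh_coeff I f {} = cube_mean I f"
  by (simp add: walsh_coeff_def walsh_def)

lemma walsh_coeff_diff: "walsh_coeff I (\<lambda>B. f B - g B) A = walsh_coeff I f A - walsh_coeff I g A"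
  by (simp add: walsh_coeff_def cube_mean_def left_diff_distrib sum_subtractf diff_divide_distrib)

lemma walsh_coeff_flip:
  assumes "finite I" "i \<in> I" "A \<subseteq> I"
  shows "walsh_coeff I (\<lambda>B. f (sym_diff B {i})) A = cube_sign A i * walsh_coeff I f A"
proof -
  have "(\<Sum>B\<in>Pow I. f (sym_diff B {i}) * walsh A B) = (\<Sum>B\<in>Pow I. f B * walsh A (sym_diff B {i}))"
    using sum_Pow_flip[OF assms(2), of "\<lambda>B. f B * walsh A (sym_diff B {i})"]
    by (simp only: sym_diff_sym_diff_cancel)
  also have "\<dots> = (\<Sum>B\<in>Pow I. cube_sign A i * (f B * walsh A B))"
    using finite_subset[OF assms(3,1)]
    by (intro sum.cong refl) (simp add: walsh_mult[symmetric] walsh_singleton)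
  finally show ?thesis
    by (simp add: walsh_coeff_def cube_mean_def sum_distrib_left[symmetric])
qed

lemma walsh_coeff_odd_eq_0:
  assumes "finite I" "A \<subseteq> I" "odd (card A)" and even: "\<And>B. B \<subseteq> I \<Longrightarrow> f (I - B) = f B"
  shows "walsh_coeff I f A = 0"
proof -
  have "(\<Sum>B\<in>Pow I. f B * walsh A B) = (\<Sum>B\<in>Pow I. f (I - B) * walsh A (I - B))"
    by (rule sum.reindex_bij_witness[of _ "\<lambda>B. I - B" "\<lambda>B. I - B"]) (auto simp: double_diff)
  also have "\<dots> = - (\<Sum>B\<in>Pow I. f B * walsh A B)"
    using assms by (simp add: walsh_Diff sum_negf[symmetric])
  finally show ?thesis
    by (simp add: walsh_coeff_def cube_mean_def)
qed

lemma sum_flip_energy_eq: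
  assumes "finite I"
  shows "(\<Sum>i\<in>I. cube_mean I (\<lambda>B. f B * (f B - f (sym_diff B {i}))))
       = (\<Sum>A\<in>Pow I. 2 * card A * (walsh_coeff I f A)\<^sup>2)"
proof -
  have "cube_mean I (\<lambda>B. f B * (f B - f (sym_diff B {i})))
      = (\<Sum>A\<in>Pow I. (1 - cube_sign A i) * (walsh_coeff I f A)\<^sup>2)" if "i \<in> I" for i
  proof -
    have "cube_mean I (\<lambda>B. f B * (f B - f (sym_diff B {i})))
        = (\<Sum>A\<in>Pow I. walsh_coeff I f A * walsh_coeff I (\<lambda>B. f B - f (sym_diff B {i})) A)"
      by (rule parseval[OF assms, symmetric])
    also have "\<dots> = (\<Sum>A\<in>Pow I. (1 - cube_sign A i) * (walsh_coeff I f A)\<^sup>2)"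
      using assms that
      by (intro sum.cong refl)
        (simp add: walsh_coeff_diff walsh_coeff_flip power2_eq_square algebra_simps)
    finally show ?thesis .
  qed
  then have "(\<Sum>i\<in>I. cube_mean I (\<lambda>B. f B * (f B - f (sym_diff B {i}))))
      = (\<Sum>A\<in>Pow I. (\<Sum>i\<in>I. 1 - cube_sign A i) * (walsh_coeff I f A)\<^sup>2)"
    by (simp add: sum.swap[of _ I] sum_distrib_right)
  also have "\<dots> = (\<Sum>A\<in>Pow I. 2 * card A * (walsh_coeff I f A)\<^sup>2)"
  proof (intro sum.cong refl)
    fix A assume "A \<in> Pow I"
    then have "(\<Sum>i\<in>I. 1 - cube_sign A i) = (\<Sum>i\<in>I. if i \<in> A then 2 else 0)"
      by (intro sum.cong) (auto simp: cube_sign_def)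
    also have "\<dots> = 2 * card A"
      using \<open>A \<in> Pow I\<close> assms by (simp add: sum.If_cases Int_absorb1)
    finally show "(\<Sum>i\<in>I. 1 - cube_sign A i) * (walsh_coeff I f A)\<^sup>2
        = 2 * card A * (walsh_coeff I f A)\<^sup>2"
      by simp
  qed
  finally show ?thesis .
qed

lemma poincare_even:
  assumes "finite I" and even: "\<And>B. B \<subseteq> I \<Longrightarrow> f (I - B) = f B"
  shows "4 * (cube_mean I (\<lambda>B. (f B)\<^sup>2) - (cube_mean I f)\<^sup>2)
       \<le> (\<Sum>i\<in>I. cube_mean I (\<lambda>B. f B * (f B - f (sym_diff B {i}))))"
proof -
  have "4 * (cube_mean I (\<lambda>B. (f B)\<^sup>2) - (cube_mean I f)\<^sup>2)
      = (\<Sum>A\<in>Pow I - {{}}. 4 * (walsh_coeff I f A)\<^sup>2)"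
    using assms(1) parseval[OF assms(1), of f f]
    by (simp add: sum.remove[of "Pow I" "{}"] walsh_coeff_empty power2_eq_square
        flip: sum_distrib_left)
  also have "\<dots> \<le> (\<Sum>A\<in>Pow I - {{}}. 2 * card A * (walsh_coeff I f A)\<^sup>2)"
  proof (intro sum_mono)
    \<comment> \<open>evenness kills the coefficients of level one\<close>
    fix A assume A: "A \<in> Pow I - {{}}"
    then have "card A \<noteq> 0"
      using finite_subset[OF _ assms(1)] by auto
    moreover have "walsh_coeff I f A = 0" if "card A = 1"
      using A that by (intro walsh_coeff_odd_eq_0 assms) auto
    ultimately show "4 * (walsh_coeff I f A)\<^sup>2 \<le> 2 * card A * (walsh_coeff I f A)\<^sup>2"
      by (cases "card A = 1") (auto intro!: mult_right_mono)
  qed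
  also have "\<dots> = (\<Sum>i\<in>I. cube_mean I (\<lambda>B. f B * (f B - f (sym_diff B {i}))))"
    using assms(1) by (simp add: sum_flip_energy_eq sum.remove[of "Pow I" "{}"])
  finally show ?thesis .
qed

section \<open>A Khintchine inequality in inner product spaces\<close>

lemma cube_mean_cube_sign_mult:
  assumes "finite I" "j \<in> I"
  shows "cube_mean I (\<lambda>B. cube_sign B j * cube_sign B l) = of_bool (j = l)"
proof (cases "j = l")
  case True
  then have "cube_sign B j * cube_sign B l = 1" for B
    by (simp add: cube_sign_def)
  then show ?thesis
    using True assms by (simp add: cube_mean_def card_Pow)
next
  case False
  have "(\<Sum>B\<in>Pow I. cube_sign B j * cube_sign B l)
      = (\<Sum>B\<in>Pow I. cube_sign (sym_diff B {j}) j * cube_sign (sym_diff B {j}) l)"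
    by (rule sum_Pow_flip[OF assms(2), symmetric])
  also have "\<dots> = - (\<Sum>B\<in>Pow I. cube_sign B j * cube_sign B l)"
    using False by (simp add: cube_sign_flip sum_negf)
  finally show ?thesis
    using False by (simp add: cube_mean_def)
qed

definition signed_sum :: "'i set \<Rightarrow> ('i \<Rightarrow> 'a::real_vector) \<Rightarrow> 'i set \<Rightarrow> 'a" where
  "signed_sum I x B = (\<Sum>j\<in>I. cube_sign B j *\<^sub>R x j)"

lemma signed_sum_flip:
  assumes "finite I" "i \<in> I"
  shows "signed_sum I x (sym_diff B {i}) = signed_sum I x B - (2 * cube_sign B i) *\<^sub>R x i"
proof -
  have "signed_sum I x (sym_diff B {i})
      = (\<Sum>j\<in>I. cube_sign B j *\<^sub>R x j - (if j = i then (2 * cube_sign B i) *\<^sub>R x i else 0))"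
    unfolding signed_sum_def
    by (intro sum.cong refl) (simp add: cube_sign_flip scaleR_left_diff_distrib[symmetric])
  then show ?thesis
    using assms by (simp add: sum_subtractf signed_sum_def)
qed

lemma signed_sum_Diff: "B \<subseteq> I \<Longrightarrow> signed_sum I x (I - B) = - signed_sum I x B"
  unfolding signed_sum_def sum_negf[symmetric]
  by (intro sum.cong refl) (auto simp: cube_sign_def)

lemma cube_mean_norm_signed_sum_sq:
  fixes x :: "'i \<Rightarrow> 'a::real_inner"
  assumes "finite I"
  shows "cube_mean I (\<lambda>B. (norm (signed_sum I x B))\<^sup>2) = (\<Sum>j\<in>I. (norm (x j))\<^sup>2)"
proof -
  have "cube_mean I (\<lambda>B. (norm (signed_sum I x B))\<^sup>2)
      = cube_mean I (\<lambda>B. \<Sum>j\<in>I. \<Sum>l\<in>I. cube_sign B j * cube_sign B l * (x j \<bullet> x l))"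
    by (simp add: signed_sum_def power2_norm_eq_inner inner_sum_left inner_sum_right
        sum_distrib_left inner_commute mult_ac)
  also have "\<dots> = (\<Sum>j\<in>I. \<Sum>l\<in>I. of_bool (j = l) * (x j \<bullet> x l))"
    using assms by (simp add: cube_mean_sum cube_mean_mult_right cube_mean_cube_sign_mult)
  also have "\<dots> = (\<Sum>j\<in>I. (norm (x j))\<^sup>2)"
    using assms by (simp add: power2_norm_eq_inner)
  finally show ?thesis .
qed

lemma sum_flip_energy_signed_sum_le:
  fixes x :: "'i \<Rightarrow> 'a::real_inner"
  assumes "finite I"
  defines "S \<equiv> signed_sum I x"
  shows "(\<Sum>i\<in>I. norm (S B) * (norm (S B) - norm (S (sym_diff B {i})))) \<le> 2 * (norm (S B))\<^sup>2"
proof -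
  have "norm (S B) * (norm (S B) - norm (S (sym_diff B {i}))) \<le> 2 * cube_sign B i * (S B \<bullet> x i)"
    if "i \<in> I" for i
  proof -
    have "S B \<bullet> (S B - (2 * cube_sign B i) *\<^sub>R x i)
        \<le> norm (S B) * norm (S B - (2 * cube_sign B i) *\<^sub>R x i)"
      by (rule norm_cauchy_schwarz)
    then show ?thesis
      using assms that
      by (simp add: signed_sum_flip inner_diff_right power2_norm_eq_inner[symmetric]
          power2_eq_square algebra_simps)
  qed
  then have "(\<Sum>i\<in>I. norm (S B) * (norm (S B) - norm (S (sym_diff B {i}))))
      \<le> (\<Sum>i\<in>I. 2 * cube_sign B i * (S B \<bullet> x i))"
    by (rule sum_mono)
  also have "\<dots> = 2 * (norm (S B))\<^sup>2"
    by (simp add: S_def signed_sum_def power2_norm_eq_inner inner_sum_right sum_distrib_left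
        mult.assoc)
  finally show ?thesis .
qed

lemma khintchine_lower:
  fixes x :: "'i \<Rightarrow> 'a::real_inner"
  assumes "finite I" "I \<noteq> {}"
  shows "(\<Sum>j\<in>I. norm (x j)) / sqrt (2 * card I) \<le> cube_mean I (\<lambda>B. norm (signed_sum I x B))"
proof -
  define f where "f B = norm (signed_sum I x B)" for B
  have "4 * (cube_mean I (\<lambda>B. (f B)\<^sup>2) - (cube_mean I f)\<^sup>2)
      \<le> (\<Sum>i\<in>I. cube_mean I (\<lambda>B. f B * (f B - f (sym_diff B {i}))))"
    using assms(1) by (intro poincare_even) (simp_all add: f_def signed_sum_Diff)
  also have "\<dots> \<le> cube_mean I (\<lambda>B. (f B)\<^sup>2 * 2)"
    unfolding cube_mean_sum[symmetric] f_def
    using sum_flip_energy_signed_sum_le[OF assms(1)]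
    by (intro cube_mean_mono) (simp add: mult.commute)
  finally have "cube_mean I (\<lambda>B. (f B)\<^sup>2) \<le> 2 * (cube_mean I f)\<^sup>2"
    unfolding cube_mean_mult_right by (simp add: algebra_simps)
  then have "(\<Sum>j\<in>I. (norm (x j))\<^sup>2) \<le> 2 * (cube_mean I f)\<^sup>2"
    using cube_mean_norm_signed_sum_sq[OF assms(1), of x] by (simp add: f_def)
  moreover have "(\<Sum>j\<in>I. norm (x j))\<^sup>2 \<le> card I * (\<Sum>j\<in>I. (norm (x j))\<^sup>2)"
    using sum_squared_le_sum_of_squares[of "\<lambda>j. norm (x j)" I] by (simp add: mult.commute)
  ultimately have "(\<Sum>j\<in>I. norm (x j))\<^sup>2 \<le> card I * (2 * (cube_mean I f)\<^sup>2)"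
    by (meson mult_left_mono of_nat_0_le_iff order_trans)
  also have "\<dots> = (sqrt (2 * card I) * cube_mean I f)\<^sup>2"
    by (simp add: power_mult_distrib)
  finally have "(\<Sum>j\<in>I. norm (x j))\<^sup>2 \<le> (sqrt (2 * card I) * cube_mean I f)\<^sup>2" .
  moreover have "0 \<le> sqrt (2 * card I) * cube_mean I f"
    by (simp add: cube_mean_def f_def sum_nonneg)
  ultimately have "(\<Sum>j\<in>I. norm (x j)) \<le> sqrt (2 * card I) * cube_mean I f"
    by (rule power2_le_imp_le)
  then show ?thesis
    using assms by (simp add: f_def[abs_def] pos_divide_le_eq card_gt_0_iff mult_ac)
qed

section \<open>Wasserstein distances and empirical measures\<close>

lemma W1_ge_mean_diff:
  assumes "integrable P (\<lambda>t. t)" "integrable Q (\<lambda>t. t)"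
  shows "ennreal ((\<integral>t. t \<partial>Q) - (\<integral>t. t \<partial>P)) \<le> W1 P Q"
  unfolding W1_def
proof (rule INF_greatest)
  fix \<pi> :: "(real \<times> real) measure"
  assume "\<pi> \<in> {\<pi>. sets \<pi> = sets borel \<and> distr \<pi> borel fst = P \<and> distr \<pi> borel snd = Q}"
  then have sets: "sets \<pi> = sets borel"
    and P: "P = distr \<pi> borel fst" and Q: "Q = distr \<pi> borel snd"
    by auto
  have fst_snd_measurable[measurable]: "fst \<in> borel_measurable \<pi>" "snd \<in> borel_measurable \<pi>"
    unfolding measurable_cong_sets[OF sets refl]
    by (intro borel_measurable_continuous_onI continuous_on_fst continuous_on_snd continuous_on_id)+
  have "integrable \<pi> fst" "integrable \<pi> snd"
    using assms integrable_distr_eq[OF fst_snd_measurable(1) measurable_ident_sets[OF refl]]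
      integrable_distr_eq[OF fst_snd_measurable(2) measurable_ident_sets[OF refl]]
    by (simp_all only: P Q)
  then have "(\<integral>t. t \<partial>Q) - (\<integral>t. t \<partial>P) = (\<integral>z. snd z - fst z \<partial>\<pi>)"
    by (simp add: P Q integral_distr)
  also have "\<dots> \<le> (\<integral>z. \<bar>fst z - snd z\<bar> \<partial>\<pi>)"
    using \<open>integrable \<pi> fst\<close> \<open>integrable \<pi> snd\<close> by (intro integral_mono) auto
  finally have "ennreal ((\<integral>t. t \<partial>Q) - (\<integral>t. t \<partial>P)) \<le> ennreal (\<integral>z. \<bar>fst z - snd z\<bar> \<partial>\<pi>)"
    by (rule ennreal_leI)
  also have "\<dots> = (\<integral>\<^sup>+z. ennreal \<bar>fst z - snd z\<bar> \<partial>\<pi>)"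
    using \<open>integrable \<pi> fst\<close> \<open>integrable \<pi> snd\<close> by (intro nn_integral_eq_integral[symmetric]) auto
  finally show "ennreal ((\<integral>t. t \<partial>Q) - (\<integral>t. t \<partial>P)) \<le> (\<integral>\<^sup>+z. ennreal \<bar>fst z - snd z\<bar> \<partial>\<pi>)" .
qed

lemma W11_ge_inner_mean_diff:
  fixes \<mu> \<nu> :: "'a::real_inner measure"
  assumes "norm v \<le> 1" "integrable \<mu> (\<lambda>x. x \<bullet> v)" "integrable \<nu> (\<lambda>x. x \<bullet> v)"
  shows "ennreal ((\<integral>x. x \<bullet> v \<partial>\<nu>) - (\<integral>x. x \<bullet> v \<partial>\<mu>)) \<le> W11 \<mu> \<nu>"
proof -
  have "integrable (distr \<rho> borel (\<lambda>x. x \<bullet> v)) (\<lambda>t. t)"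
    and "(\<integral>t. t \<partial>distr \<rho> borel (\<lambda>x. x \<bullet> v)) = (\<integral>x. x \<bullet> v \<partial>\<rho>)"
    if "integrable \<rho> (\<lambda>x. x \<bullet> v)" for \<rho> :: "'a measure"
  proof -
    have m: "(\<lambda>x. x \<bullet> v) \<in> borel_measurable \<rho>"
      using that by (rule borel_measurable_integrable)
    show "integrable (distr \<rho> borel (\<lambda>x. x \<bullet> v)) (\<lambda>t. t)"
      using that by (simp only: integrable_distr_eq[OF m measurable_ident_sets[OF refl]])
    show "(\<integral>t. t \<partial>distr \<rho> borel (\<lambda>x. x \<bullet> v)) = (\<integral>x. x \<bullet> v \<partial>\<rho>)"
      by (rule integral_distr[OF m measurable_ident_sets[OF refl]])
  qed
  then have "ennreal ((\<integral>x. x \<bullet> v \<partial>\<nu>) - (\<integral>x. x \<bullet> v \<partial>\<mu>))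
      \<le> W1 (distr \<mu> borel (\<lambda>x. x \<bullet> v)) (distr \<nu> borel (\<lambda>x. x \<bullet> v))"
    using W1_ge_mean_diff assms(2,3) by metis
  also have "\<dots> \<le> W11 \<mu> \<nu>"
    unfolding W11_def using assms(1) by (intro SUP_upper) simp
  finally show ?thesis .
qed

lemma empirical_measure_eq_distr_pmf_of_set:
  assumes "n \<ge> 1"
  shows "empirical_measure n x = distr (measure_pmf (pmf_of_set {..<n})) borel x"
proof -
  let ?N = "distr (measure_pmf (pmf_of_set {..<n})) borel x"
  have emeasure: "emeasure ?N A = ennreal (real (card {i\<in>{..<n}. x i \<in> A}) / real n)"
    if "A \<in> sets borel" for A
  proof -
    have "emeasure ?N A = emeasure (measure_pmf (pmf_of_set {..<n})) (x -` A)"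
      using that by (simp add: emeasure_distr)
    also have "{..<n} \<inter> x -` A = {i\<in>{..<n}. x i \<in> A}"
      by auto
    then have "emeasure (measure_pmf (pmf_of_set {..<n})) (x -` A)
        = ennreal (real (card {i\<in>{..<n}. x i \<in> A}) / real n)"
      using assms emeasure_pmf_of_set[of "{..<n}" "x -` A"] by (simp add: lessThan_empty_iff)
    finally show ?thesis .
  qed
  have "?N = measure_of (space ?N) (sets ?N) (emeasure ?N)"
    by (rule measure_of_of_measure[symmetric])
  also have "\<dots> = measure_of UNIV (sets borel) (emeasure ?N)"
    by simp
  also have "\<dots> = empirical_measure n x"
    unfolding empirical_measure_def
  proof (rule measure_of_eq)
    show "emeasure ?N a = ennreal (real (card {i\<in>{..<n}. x i \<in> a}) / real n)"
      if "a \<in> sigma_sets UNIV (sets borel)" for a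
      by (rule emeasure) (use that in \<open>metis sets.sigma_sets_eq space_borel\<close>)
  qed simp
  finally show ?thesis ..
qed

lemma
  fixes g :: "'a::topological_space \<Rightarrow> real"
  assumes "n \<ge> 1" "g \<in> borel_measurable borel"
  shows integrable_empirical_measure: "integrable (empirical_measure n x) g"
    and integral_empirical_measure: "(\<integral>y. g y \<partial>empirical_measure n x) = (\<Sum>i<n. g (x i)) / n"
proof -
  have ne: "{..<n} \<noteq> {}"
    using assms(1) by (auto simp: lessThan_empty_iff)
  have x: "x \<in> measurable (measure_pmf (pmf_of_set {..<n})) borel"
    by simp
  show "integrable (empirical_measure n x) g"
    using ne by (simp add: empirical_measure_eq_distr_pmf_of_set[OF assms(1)]
        integrable_distr_eq[OF x assms(2)] integrable_measure_pmf_finite)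
  show "(\<integral>y. g y \<partial>empirical_measure n x) = (\<Sum>i<n. g (x i)) / n"
    using ne by (simp add: empirical_measure_eq_distr_pmf_of_set[OF assms(1)]
        integral_distr[OF x assms(2)] integral_pmf_of_set)
qed

section \<open>Sums of centred i.i.d. vectors\<close>

lemma Cauchy_if_dist_le_null:
  fixes X :: "nat \<Rightarrow> 'a::metric_space" and D :: "nat \<Rightarrow> ennreal"
  assumes "D \<longlonglongrightarrow> 0" and dist: "\<And>m n. ennreal (dist (X m) (X n)) \<le> D m + D n"
  shows "Cauchy X"
proof (rule metric_CauchyI)
  fix e :: real assume "0 < e"
  then obtain N where N: "\<And>n. N \<le> n \<Longrightarrow> D n < ennreal (e / 2)"
    using order_tendstoD(2)[OF assms(1), of "ennreal (e / 2)"]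
    by (auto simp: eventually_sequentially)
  have "dist (X m) (X n) < e" if "N \<le> m" "N \<le> n" for m n
  proof -
    have "ennreal (dist (X m) (X n)) < ennreal (e / 2) + ennreal (e / 2)"
      using dist[of m n] N[OF that(1)] N[OF that(2)] by (meson add_strict_mono order_le_less_trans)
    also have "\<dots> = ennreal e"
      using \<open>0 < e\<close> by (simp flip: ennreal_plus)
    finally show ?thesis
      using \<open>0 < e\<close> by (simp add: ennreal_less_iff)
  qed
  then show "\<exists>N. \<forall>m\<ge>N. \<forall>n\<ge>N. dist (X m) (X n) < e"
    by blast
qed

text \<open>The library's \<open>integrableI_bounded\<close> is stated for the class \<open>banach\<close>, to which a type of
  sort \<open>{real_normed_vector, complete_space}\<close> is not known to belong.\<close>

lemma integrableI_bounded_complete: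
  fixes f :: "'a \<Rightarrow> 'b::{real_normed_vector, complete_space, second_countable_topology}"
  assumes f[measurable]: "f \<in> borel_measurable M" and fin: "(\<integral>\<^sup>+x. norm (f x) \<partial>M) < \<infinity>"
  shows "integrable M f"
proof -
  obtain s where s: "\<And>i. simple_function M (s i)"
    and lim: "\<And>x. x \<in> space M \<Longrightarrow> (\<lambda>i. s i x) \<longlonglongrightarrow> f x"
    and bound: "\<And>i x. x \<in> space M \<Longrightarrow> norm (s i x) \<le> 2 * norm (f x)"
    using borel_measurable_implies_sequence_metric[OF f, of 0] by simp metis
  have fin2: "(\<integral>\<^sup>+x. ennreal (2 * norm (f x)) \<partial>M) < \<infinity>"
    using fin by (simp add: ennreal_mult nn_integral_cmult ennreal_mult_less_top)
  have sbi: "Bochner_Integration.simple_bochner_integrable M (s i)" for i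
  proof (rule simple_bochner_integrableI_bounded[OF s])
    have "(\<integral>\<^sup>+x. norm (s i x) \<partial>M) \<le> (\<integral>\<^sup>+x. ennreal (2 * norm (f x)) \<partial>M)"
      using bound by (intro nn_integral_mono) simp
    then show "(\<integral>\<^sup>+x. norm (s i x) \<partial>M) < \<infinity>"
      using fin2 by (rule le_less_trans)
  qed
  have err: "(\<lambda>i. \<integral>\<^sup>+x. norm (f x - s i x) \<partial>M) \<longlonglongrightarrow> 0"
    using f s bound lim fin2
    by (intro nn_integral_dominated_convergence_norm[where w="\<lambda>x. 2 * norm (f x)"])
       (auto intro: borel_measurable_simple_function)
  have "Cauchy (\<lambda>i. Bochner_Integration.simple_bochner_integral M (s i))"
    using err
    by (rule Cauchy_if_dist_le_null)
      (simp add: dist_norm simple_bochner_integral_bounded[OF f sbi sbi])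
  then obtain I where "(\<lambda>i. Bochner_Integration.simple_bochner_integral M (s i)) \<longlonglongrightarrow> I"
    by (auto simp: Cauchy_convergent_iff convergent_def)
  then show ?thesis
    by (intro integrable.intros has_bochner_integral.intros[OF f sbi err])
qed

lemma (in prob_space) integrable_PiM_component:
  fixes g :: "'a \<Rightarrow> real"
  assumes "i \<in> J" "integrable M g"
  shows "integrable (PiM J (\<lambda>_. M)) (\<lambda>\<omega>. g (\<omega> i))"
  using assms distr_PiM_component[of J "\<lambda>_. M" i] prob_space_axioms
    integrable_distr_eq[OF measurable_component_singleton[OF assms(1)]
      borel_measurable_integrable[OF assms(2)]]
  by simp

lemma (in prob_space) integral_PiM_component:
  fixes g :: "'a \<Rightarrow> real"
  assumes "i \<in> J" "g \<in> borel_measurable M"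
  shows "(\<integral>\<omega>. g (\<omega> i) \<partial>PiM J (\<lambda>_. M)) = (\<integral>x. g x \<partial>M)"
  using assms distr_PiM_component[of J "\<lambda>_. M" i] prob_space_axioms
    integral_distr[OF measurable_component_singleton[OF assms(1)] assms(2)]
  by simp

lemma integral_cube_mean:
  assumes "\<And>B. B \<subseteq> I \<Longrightarrow> integrable N (g B)"
  shows "(\<integral>\<omega>. cube_mean I (\<lambda>B. g B \<omega>) \<partial>N) = cube_mean I (\<lambda>B. \<integral>\<omega>. g B \<omega> \<partial>N)"
  using assms by (simp add: cube_mean_def Bochner_Integration.integral_sum)

lemma inner_sgn_self: "x \<bullet> sgn x = norm x"
  by (cases "x = 0") (simp_all add: sgn_div_norm dot_square_norm power2_eq_square)

locale centred_prob_space = prob_space M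
  for M :: "'a::{real_inner, complete_space, second_countable_topology} measure" +
  assumes sets_M: "sets M = sets borel"
    and integrable_norm_M: "integrable M norm"
    and mean_zero: "(\<integral>x. x \<partial>M) = 0"
begin

lemma integrable_ident: "integrable M (\<lambda>x. x)"
proof (rule integrableI_bounded_complete)
  show "(\<lambda>x. x) \<in> borel_measurable M"
    by (rule measurable_ident_sets[OF sets_M])
  show "(\<integral>\<^sup>+x. norm x \<partial>M) < \<infinity>"
    using integrableD(2)[OF integrable_norm_M] by (simp add: less_top)
qed

lemma integral_inner_eq_0: "(\<integral>x. x \<bullet> v \<partial>M) = 0"
  using integrable_ident mean_zero by simp

lemma W11_empirical_ge_norm_mean:
  assumes "n \<ge> 1"
  shows "ennreal (norm (\<Sum>i<n. x i) / n) \<le> W11 M (empirical_measure n x)"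
proof -
  define v where "v = sgn (\<Sum>i<n. x i)"
  have v_borel: "(\<lambda>y. y \<bullet> v) \<in> borel_measurable borel"
    by (intro borel_measurable_continuous_onI continuous_intros)
  have "ennreal (norm (\<Sum>i<n. x i) / n)
      = ennreal ((\<integral>y. y \<bullet> v \<partial>empirical_measure n x) - (\<integral>y. y \<bullet> v \<partial>M))"
    unfolding integral_empirical_measure[OF assms v_borel] integral_inner_eq_0
    by (simp add: v_def inner_sgn_self flip: inner_sum_left)
  also have "\<dots> \<le> W11 M (empirical_measure n x)"
    using integrable_ident
    by (intro W11_ge_inner_mean_diff integrable_empirical_measure[OF assms v_borel])
       (auto simp: v_def norm_sgn)
  finally show ?thesis .
qed

lemma borel_measurable_PiM_lincomb:
  assumes "A \<subseteq> J"
  shows "(\<lambda>\<omega>. \<Sum>i\<in>A. c i *\<^sub>R \<omega> i) \<in> borel_measurable (PiM J (\<lambda>_. M))"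
proof -
  have "(\<lambda>\<omega>. \<omega> i) \<in> borel_measurable (PiM J (\<lambda>_. M))" if "i \<in> A" for i
    using measurable_component_singleton[of i J "\<lambda>_. M"] assms that
    by (simp add: measurable_cong_sets[OF refl sets_M] subsetD)
  then show ?thesis
    by (intro borel_measurable_sum borel_measurable_scaleR) auto
qed

lemma integrable_norm_lincomb_PiM:
  assumes "finite A" "A \<subseteq> J"
  shows "integrable (PiM J (\<lambda>_. M)) (\<lambda>\<omega>. norm (a + (\<Sum>i\<in>A. c i *\<^sub>R \<omega> i)))"
proof (rule Bochner_Integration.integrable_bound)
  interpret PiM: prob_space "PiM J (\<lambda>_. M)"
    by (rule prob_space_PiM) (rule prob_space_axioms)
  show "integrable (PiM J (\<lambda>_. M)) (\<lambda>\<omega>. norm a + (\<Sum>i\<in>A. \<bar>c i\<bar> * norm (\<omega> i)))"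
    using assms integrable_norm_M
    by (intro Bochner_Integration.integrable_add PiM.integrable_const
        Bochner_Integration.integrable_sum integrable_mult_right integrable_PiM_component) auto
  show "(\<lambda>\<omega>. norm (a + (\<Sum>i\<in>A. c i *\<^sub>R \<omega> i))) \<in> borel_measurable (PiM J (\<lambda>_. M))"
    using borel_measurable_PiM_lincomb[OF assms(2), of c] by measurable
  have "norm (a + (\<Sum>i\<in>A. c i *\<^sub>R \<omega> i)) \<le> norm a + (\<Sum>i\<in>A. \<bar>c i\<bar> * norm (\<omega> i))" for \<omega>
    by (rule order_trans[OF norm_triangle_ineq add_left_mono[OF order_trans[OF norm_sum]]]) simp
  then show "AE \<omega> in PiM J (\<lambda>_. M). norm (norm (a + (\<Sum>i\<in>A. c i *\<^sub>R \<omega> i)))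
      \<le> norm (norm a + (\<Sum>i\<in>A. \<bar>c i\<bar> * norm (\<omega> i)))"
    by (intro AE_I2) (simp add: order_trans[OF _ abs_ge_self])
qed

lemma norm_le_nn_integral_norm_add_sum:
  assumes "finite J"
  shows "ennreal (norm a) \<le> (\<integral>\<^sup>+\<omega>. norm (a + (\<Sum>i\<in>J. \<omega> i)) \<partial>PiM J (\<lambda>_. M))"
proof -
  interpret PiM: prob_space "PiM J (\<lambda>_. M)"
    by (rule prob_space_PiM) (rule prob_space_axioms)
  have int_sum: "integrable (PiM J (\<lambda>_. M)) (\<lambda>\<omega>. norm (a + (\<Sum>i\<in>J. \<omega> i)))"
    using integrable_norm_lincomb_PiM[OF assms order_refl, of a "\<lambda>_. 1"] by simp
  have int_inner: "integrable (PiM J (\<lambda>_. M)) (\<lambda>\<omega>. \<omega> i \<bullet> sgn a)" if "i \<in> J" for i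
    using that integrable_ident by (intro integrable_PiM_component) auto
  have "(\<integral>\<omega>. \<omega> i \<bullet> sgn a \<partial>PiM J (\<lambda>_. M)) = 0" if "i \<in> J" for i
    using that integral_PiM_component[of i J "\<lambda>x. x \<bullet> sgn a"] integrable_ident
    by (simp add: borel_measurable_integrable integral_inner_eq_0)
  then have "norm a = (\<integral>\<omega>. norm a + (\<Sum>i\<in>J. \<omega> i \<bullet> sgn a) \<partial>PiM J (\<lambda>_. M))"
    using int_inner by (simp add: Bochner_Integration.integral_sum PiM.prob_space)
  also have "\<dots> \<le> (\<integral>\<omega>. norm (a + (\<Sum>i\<in>J. \<omega> i)) \<partial>PiM J (\<lambda>_. M))"
  proof (rule integral_mono[OF _ int_sum])
    show "integrable (PiM J (\<lambda>_. M)) (\<lambda>\<omega>. norm a + (\<Sum>i\<in>J. \<omega> i \<bullet> sgn a))"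
      using int_inner by auto
    have "norm a + (\<Sum>i\<in>J. \<omega> i \<bullet> sgn a) = (a + (\<Sum>i\<in>J. \<omega> i)) \<bullet> sgn a" for \<omega>
      by (simp add: inner_add_left inner_sum_left inner_sgn_self)
    moreover have "(a + (\<Sum>i\<in>J. \<omega> i)) \<bullet> sgn a \<le> norm (a + (\<Sum>i\<in>J. \<omega> i))" for \<omega>
      using norm_cauchy_schwarz[of "a + (\<Sum>i\<in>J. \<omega> i)" "sgn a"]
      by (simp add: norm_sgn mult_left_le split: if_splits)
    ultimately show "norm a + (\<Sum>i\<in>J. \<omega> i \<bullet> sgn a) \<le> norm (a + (\<Sum>i\<in>J. \<omega> i))" for \<omega>
      by simp
  qed
  finally have "ennreal (norm a) \<le> ennreal (\<integral>\<omega>. norm (a + (\<Sum>i\<in>J. \<omega> i)) \<partial>PiM J (\<lambda>_. M))"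
    by (rule ennreal_leI)
  also have "\<dots> = (\<integral>\<^sup>+\<omega>. norm (a + (\<Sum>i\<in>J. \<omega> i)) \<partial>PiM J (\<lambda>_. M))"
    by (rule nn_integral_eq_integral[OF int_sum, symmetric]) simp
  finally show ?thesis .
qed

lemma integral_norm_partial_sum_le:
  assumes "finite I" "A \<subseteq> I"
  shows "(\<integral>\<omega>. norm (\<Sum>i\<in>A. \<omega> i) \<partial>PiM I (\<lambda>_. M)) \<le> (\<integral>\<omega>. norm (\<Sum>i\<in>I. \<omega> i) \<partial>PiM I (\<lambda>_. M))"
proof -
  interpret product_sigma_finite "\<lambda>_. M"
    by unfold_locales
  interpret PiM: prob_space "PiM K (\<lambda>_. M)" for K
    by (rule prob_space_PiM) (rule prob_space_axioms)
  define K where "K = I - A"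
  have AK: "I = A \<union> K" "A \<inter> K = {}" "finite A" "finite K"
    using assms finite_subset by (auto simp: K_def)
  have merge_A: "(\<Sum>i\<in>A. merge A K (x, y) i) = (\<Sum>i\<in>A. x i)" for x y
    using AK by (simp cong: sum.cong)
  have merge_I: "(\<Sum>i\<in>I. merge A K (x, y) i) = (\<Sum>i\<in>A. x i) + (\<Sum>i\<in>K. y i)" for x y
    using AK by (simp add: sum.union_disjoint cong: sum.cong)
  have measurable: "(\<lambda>\<omega>. ennreal (norm (\<Sum>i\<in>B. \<omega> i))) \<in> borel_measurable (PiM (A \<union> K) (\<lambda>_. M))"
    if "B \<subseteq> I" for B
    using borel_measurable_PiM_lincomb[of B "A \<union> K" "\<lambda>_. 1"] that AK(1) by simp
  have "(\<integral>\<^sup>+\<omega>. norm (\<Sum>i\<in>A. \<omega> i) \<partial>PiM I (\<lambda>_. M))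
      = (\<integral>\<^sup>+x. (\<integral>\<^sup>+y. norm (\<Sum>i\<in>A. x i) \<partial>PiM K (\<lambda>_. M)) \<partial>PiM A (\<lambda>_. M))"
    using product_nn_integral_fold[OF AK(2-4) measurable[OF assms(2)]]
    by (simp add: AK(1)[symmetric] merge_A)
  also have "\<dots> \<le> (\<integral>\<^sup>+x. (\<integral>\<^sup>+y. norm ((\<Sum>i\<in>A. x i) + (\<Sum>i\<in>K. y i)) \<partial>PiM K (\<lambda>_. M)) \<partial>PiM A (\<lambda>_. M))"
    by (rule nn_integral_mono)
      (simp add: PiM.emeasure_space_1 norm_le_nn_integral_norm_add_sum[OF AK(4)])
  also have "\<dots> = (\<integral>\<^sup>+\<omega>. norm (\<Sum>i\<in>I. \<omega> i) \<partial>PiM I (\<lambda>_. M))"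
    using product_nn_integral_fold[OF AK(2-4) measurable[OF order_refl]]
    by (simp add: AK(1)[symmetric] merge_I)
  finally show ?thesis
    using integrable_norm_lincomb_PiM[OF AK(3) assms(2), of 0 "\<lambda>_. 1"]
      integrable_norm_lincomb_PiM[OF assms(1) order_refl, of 0 "\<lambda>_. 1"]
    by (simp add: nn_integral_eq_integral)
qed

lemma integral_norm_signed_sum_le:
  assumes "finite I" "B \<subseteq> I"
  shows "(\<integral>\<omega>. norm (signed_sum I \<omega> B) \<partial>PiM I (\<lambda>_. M)) \<le> 2 * (\<integral>\<omega>. norm (\<Sum>i\<in>I. \<omega> i) \<partial>PiM I (\<lambda>_. M))"
proof -
  have fin: "finite (I - B)" "finite B"
    using assms finite_subset by auto
  have int: "integrable (PiM I (\<lambda>_. M)) (\<lambda>\<omega>. norm (\<Sum>i\<in>C. \<omega> i))" if "finite C" "C \<subseteq> I" for C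
    using integrable_norm_lincomb_PiM[OF that, of 0 "\<lambda>_. 1"] by simp
  have int_signed: "integrable (PiM I (\<lambda>_. M)) (\<lambda>\<omega>. norm (signed_sum I \<omega> B))"
    using integrable_norm_lincomb_PiM[OF assms(1) order_refl, of 0 "cube_sign B"]
    by (simp add: signed_sum_def)
  have signed_sum_eq: "signed_sum I \<omega> B = (\<Sum>i\<in>I - B. \<omega> i) - (\<Sum>i\<in>B. \<omega> i)" for \<omega>
    unfolding signed_sum_def sum.subset_diff[OF assms(2,1)]
    by (simp add: cube_sign_def sum_negf)
  have "(\<integral>\<omega>. norm (signed_sum I \<omega> B) \<partial>PiM I (\<lambda>_. M))
      \<le> (\<integral>\<omega>. norm (\<Sum>i\<in>I - B. \<omega> i) + norm (\<Sum>i\<in>B. \<omega> i) \<partial>PiM I (\<lambda>_. M))"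
    using int_signed int fin assms
    by (intro integral_mono) (auto simp: signed_sum_eq norm_triangle_ineq4)
  also have "\<dots> \<le> 2 * (\<integral>\<omega>. norm (\<Sum>i\<in>I. \<omega> i) \<partial>PiM I (\<lambda>_. M))"
    using int fin assms integral_norm_partial_sum_le[OF assms(1), of "I - B"]
      integral_norm_partial_sum_le[OF assms(1), of B]
    by simp
  finally show ?thesis .
qed

lemma integral_norm_sum_ge:
  assumes "finite I" "I \<noteq> {}"
  shows "(\<integral>x. norm x \<partial>M) / (2 * sqrt (2 * card I)) \<le> (\<integral>\<omega>. norm (\<Sum>i\<in>I. \<omega> i) \<partial>PiM I (\<lambda>_. M)) / card I"
proof -
  define T where "T = (\<integral>\<omega>. norm (\<Sum>i\<in>I. \<omega> i) \<partial>PiM I (\<lambda>_. M))"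
  have int_signed: "integrable (PiM I (\<lambda>_. M)) (\<lambda>\<omega>. norm (signed_sum I \<omega> B))" for B
    using integrable_norm_lincomb_PiM[OF assms(1) order_refl, of 0 "cube_sign B"]
    by (simp add: signed_sum_def)
  have int_comp: "integrable (PiM I (\<lambda>_. M)) (\<lambda>\<omega>. norm (\<omega> j))" if "j \<in> I" for j
    using that integrable_norm_M by (rule integrable_PiM_component)
  have "card I * (\<integral>x. norm x \<partial>M) / sqrt (2 * card I)
      = (\<integral>\<omega>. (\<Sum>j\<in>I. norm (\<omega> j)) / sqrt (2 * card I) \<partial>PiM I (\<lambda>_. M))"
    using int_comp integral_PiM_component[of _ I norm]
      borel_measurable_integrable[OF integrable_norm_M]
    by (simp add: Bochner_Integration.integral_sum)
  also have "\<dots> \<le> (\<integral>\<omega>. cube_mean I (\<lambda>B. norm (signed_sum I \<omega> B)) \<partial>PiM I (\<lambda>_. M))"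
    using int_comp int_signed
    by (intro integral_mono khintchine_lower assms) (auto simp: cube_mean_def)
  also have "\<dots> = cube_mean I (\<lambda>B. \<integral>\<omega>. norm (signed_sum I \<omega> B) \<partial>PiM I (\<lambda>_. M))"
    using int_signed by (rule integral_cube_mean)
  also have "\<dots> \<le> cube_mean I (\<lambda>_. 2 * T)"
    unfolding T_def by (intro cube_mean_mono integral_norm_signed_sum_le assms(1))
  also have "\<dots> = 2 * T"
    using assms(1) by (rule cube_mean_const)
  finally show ?thesis
    using assms by (simp add: T_def field_simps card_gt_0_iff)
qed

end

lemma (in prob_space) nn_integral_iid_eq_PiM:
  assumes "I \<noteq> {}" "\<And>i. i \<in> I \<Longrightarrow> X i \<in> borel_measurable M" "indep_vars (\<lambda>_. borel) X I"
    and "\<And>i. i \<in> I \<Longrightarrow> distr M borel (X i) = N"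
    and g: "g \<in> borel_measurable (PiM I (\<lambda>_. borel))"
  shows "(\<integral>\<^sup>+\<omega>. g (\<lambda>i\<in>I. X i \<omega>) \<partial>M) = (\<integral>\<^sup>+\<omega>. g \<omega> \<partial>PiM I (\<lambda>_. N))"
proof -
  have X: "(\<lambda>\<omega>. \<lambda>i\<in>I. X i \<omega>) \<in> measurable M (PiM I (\<lambda>_. borel))"
    using assms(2) by (rule measurable_restrict)
  have "PiM I (\<lambda>_. N) = PiM I (\<lambda>i. distr M borel (X i))"
    by (rule PiM_cong) (simp_all add: assms(4))
  also have "\<dots> = distr M (PiM I (\<lambda>_. borel)) (\<lambda>\<omega>. \<lambda>i\<in>I. X i \<omega>)"
    using indep_vars_iff_distr_eq_PiM'[OF assms(1,2)] assms(3) by simp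
  finally show ?thesis
    by (simp add: nn_integral_distr[OF X] g)
qed

theorem corollary2p11:
  fixes M :: "'a::{real_inner, complete_space, second_countable_topology} measure"
    and P :: "'w measure"
    and X :: "nat \<Rightarrow> 'w \<Rightarrow> 'a"
    and n :: nat
  assumes "prob_space M" and "sets M = sets borel"
    and "integrable M norm"
    and "(\<integral>x. x \<partial>M) = 0"
    and "n \<ge> 1"
    and "prob_space P"
    and "\<And>i. i < n \<Longrightarrow> X i \<in> borel_measurable P"
    and "prob_space.indep_vars P (\<lambda>_. borel) X {..<n}"
    and "\<And>i. i < n \<Longrightarrow> distr P borel (X i) = M"
  shows "(\<integral>\<^sup>+ \<omega>. W11 M (empirical_measure n (\<lambda>i. X i \<omega>)) \<partial>P)
           \<ge> ennreal (1 / (2 * sqrt (2 * real n)) * (\<integral>x. norm x \<partial>M))"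
proof -
  interpret centred_prob_space M
    using assms(1-4) by (simp add: centred_prob_space_def centred_prob_space_axioms_def)
  interpret P: prob_space P
    by (rule assms(6))
  have n: "{..<n} \<noteq> {}" "real n > 0"
    using assms(5) by (auto simp: lessThan_empty_iff)
  have "ennreal (1 / (2 * sqrt (2 * real n)) * (\<integral>x. norm x \<partial>M))
      \<le> ennreal (\<integral>\<omega>. norm (\<Sum>i<n. \<omega> i) / n \<partial>PiM {..<n} (\<lambda>_. M))"
    using integral_norm_sum_ge[of "{..<n}"] n by (intro ennreal_leI) simp
  also have "\<dots> = (\<integral>\<^sup>+\<omega>. ennreal (norm (\<Sum>i<n. \<omega> i) / n) \<partial>PiM {..<n} (\<lambda>_. M))"
    using integrable_norm_lincomb_PiM[of "{..<n}" "{..<n}" 0 "\<lambda>_. 1"]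
    by (intro nn_integral_eq_integral[symmetric]) auto
  also have "\<dots> = (\<integral>\<^sup>+\<omega>. ennreal (norm (\<Sum>i<n. X i \<omega>) / n) \<partial>P)"
    using P.nn_integral_iid_eq_PiM[OF n(1), of X M "\<lambda>\<omega>. ennreal (norm (\<Sum>i<n. \<omega> i) / n)"] assms(7-9)
    by simp
  also have "\<dots> \<le> (\<integral>\<^sup>+ \<omega>. W11 M (empirical_measure n (\<lambda>i. X i \<omega>)) \<partial>P)"
    using assms(5) by (intro nn_integral_mono W11_empirical_ge_norm_mean)
  finally show ?thesis .
qed

end
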